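(* Let $K$ be a field of characteristic $0$, $U=K[x^{\pm1}]$ the Laurent polynomial algebra, $\beta\in K$, and let $Os(0,\beta)$ denote $U$ with the product $a\star b=\partial(ab)+2\beta x^{-2}ab$ ($\partial=d/dx$). Let $\overline{Os}(0,\beta)$ be the subspace spanned by the elements $\overline{x^i}$, $i\in\mathbb Z$, $i\neq-1$, where $\overline{x^i}=x^i$ for $i<-1$ and $\overline{x^i}=x^i+2(i+1)^{-1}\beta x^{i-1}$ for $i>-1$. Then $\overline{Os}(0,\beta)$ is closed under $\star$; moreover it is an ideal of $(Os(0,\beta),\star)$ of codimension $1$. *)

theory Defs
  imports Complex_Main "HOL-Library.Poly_Mapping"
begin

text \<open>Laurent polynomials K[x, x^-1] are modelled as finitely supported coefficient
  functions int =>0 K; the ring structure of poly_mapping is the usual convolution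
  product, so this type is exactly the Laurent polynomial algebra.\<close>

type_synonym 'a laurent = "int \<Rightarrow>\<^sub>0 'a"

definition lmono :: "int \<Rightarrow> 'a::field laurent"
  where "lmono i = Poly_Mapping.single i 1"

definition lscale :: "'a::field \<Rightarrow> 'a laurent \<Rightarrow> 'a laurent"
  where "lscale c p = Poly_Mapping.map (\<lambda>v. c * v) p"

lift_definition lderiv :: "'a::field laurent \<Rightarrow> 'a laurent"
  is "\<lambda>p n. of_int (n + 1) * p (n + 1)"
proof -
  fix p :: "int \<Rightarrow> 'a" assume "finite {n. p n \<noteq> 0}"
  then have "finite ((\<lambda>n. n - 1) ` {n. p n \<noteq> 0})" by simp
  moreover have "{n. of_int (n + 1) * p (n + 1) \<noteq> 0} \<subseteq> (\<lambda>n. n - 1) ` {n. p n \<noteq> 0}"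
    by (auto simp: image_iff intro!: exI[of _ "_ + 1"])
  ultimately show "finite {n. of_int (n + 1) * p (n + 1) \<noteq> (0::'a)}"
    by (rule finite_subset[rotated])
qed

definition os_star :: "'a::field \<Rightarrow> 'a laurent \<Rightarrow> 'a laurent \<Rightarrow> 'a laurent"
  where "os_star \<beta> a b = lderiv (a * b) + lscale (2 * \<beta>) (lmono (-2) * (a * b))"

definition os_bar :: "'a::field \<Rightarrow> int \<Rightarrow> 'a laurent"
  where "os_bar \<beta> i =
     (if i < -1 then lmono i
      else lmono i + lscale (2 * inverse (of_int (i + 1)) * \<beta>) (lmono (i - 1)))"

definition lspan :: "'a::field laurent set \<Rightarrow> 'a laurent set"
  where "lspan S = {(\<Sum>v\<in>T. lscale (c v) v) | T c. finite T \<and> T \<subseteq> S}"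

definition os_bar_space :: "'a::field \<Rightarrow> 'a laurent set"
  where "os_bar_space \<beta> = lspan {os_bar \<beta> i | i. i \<noteq> -1}"

definition is_alg_ideal :: "('a::field laurent \<Rightarrow> 'a laurent \<Rightarrow> 'a laurent) \<Rightarrow> 'a laurent set \<Rightarrow> bool"
  where "is_alg_ideal mult I \<longleftrightarrow>
     0 \<in> I \<and> (\<forall>u\<in>I. \<forall>v\<in>I. u + v \<in> I) \<and> (\<forall>c. \<forall>u\<in>I. lscale c u \<in> I) \<and>
     (\<forall>a. \<forall>u\<in>I. mult a u \<in> I \<and> mult u a \<in> I)"

definition codim_one :: "'a::field laurent set \<Rightarrow> bool"
  where "codim_one I \<longleftrightarrow> (\<exists>v. v \<notin> I \<and> (\<forall>u. \<exists>c. u - lscale c v \<in> I))"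

end

theory Submission
  imports Defs
begin

text \<open>Let rho(p) be the residue of p exp(-2\<beta>/x), so that rho(x^n) = (-2\<beta>)^(n+1) / (n+1)!
  for n \<ge> -1 and rho(x^n) = 0 otherwise.  Since (e^(-2\<beta>/x) w)' = e^(-2\<beta>/x) (w' + 2\<beta> x^(-2) w),
  every product a \<star> b is, up to the factor e^(-2\<beta>/x), an exact derivative, so rho(a \<star> b) = 0.
  The generators overline{x^i} lie in the kernel of rho, and modulo their span each monomial x^k
  is congruent to rho(x^k) x^(-1).  As rho(x^(-1)) = 1, that span is exactly the hyperplane
  ker rho.\<close>

lemma lookup_lscale [simp]: "Poly_Mapping.lookup (lscale c p) n = c * Poly_Mapping.lookup p n"
  unfolding lscale_def by (simp add: map.rep_eq when_def)

lemma lookup_lderiv [simp]: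
  "Poly_Mapping.lookup (lderiv p) n = of_int (n + 1) * Poly_Mapping.lookup p (n + 1)"
  by (simp add: lderiv.rep_eq)

lemma lderiv_add: "lderiv (p + q) = lderiv p + lderiv q"
  by (rule poly_mapping_eqI) (simp add: lookup_add algebra_simps)

lemma lderiv_single: "lderiv (Poly_Mapping.single k c) = Poly_Mapping.single (k - 1) (of_int k * c)"
  by (rule poly_mapping_eqI) (auto simp: lookup_single when_def)

lemma lmono_mult_single: "lmono j * Poly_Mapping.single k c = Poly_Mapping.single (j + k) c"
  by (simp add: lmono_def mult_single)

lemma laurent_induct [case_names zero add_monomial]:
  assumes "P 0"
    and "\<And>p k c. P p \<Longrightarrow> P (p + Poly_Mapping.single k c)"
  shows "P p"
proof (induction p rule: update_induct)
  case const
  show ?case by (fact assms(1))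
next
  case (update p k c)
  have "Poly_Mapping.update k c p = p + Poly_Mapping.single k c"
    using \<open>k \<notin> Poly_Mapping.keys p\<close>
    by (intro poly_mapping_eqI) (auto simp: lookup_update lookup_add lookup_single when_def in_keys_iff)
  with update.IH show ?case by (simp add: assms(2))
qed

interpretation L: module "lscale :: 'a::field \<Rightarrow> 'a laurent \<Rightarrow> 'a laurent"
  by unfold_locales (auto intro!: poly_mapping_eqI simp: lookup_add algebra_simps)

lemma lspan_eq_span: "lspan = L.span"
  by (auto simp: fun_eq_iff lspan_def L.span_explicit)

definition twisted_residue_coeff :: "'a::field_char_0 \<Rightarrow> int \<Rightarrow> 'a" where
  "twisted_residue_coeff \<beta> n =
     (if n < -1 then 0 else (-2 * \<beta>) ^ nat (n + 1) / fact (nat (n + 1)))"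

definition twisted_residue :: "'a::field_char_0 \<Rightarrow> 'a laurent \<Rightarrow> 'a" where
  "twisted_residue \<beta> p =
     (\<Sum>n\<in>Poly_Mapping.keys p. Poly_Mapping.lookup p n * twisted_residue_coeff \<beta> n)"

lemma twisted_residue_eq_sum:
  assumes "finite A" and "Poly_Mapping.keys p \<subseteq> A"
  shows "twisted_residue \<beta> p = (\<Sum>n\<in>A. Poly_Mapping.lookup p n * twisted_residue_coeff \<beta> n)"
  unfolding twisted_residue_def using assms
  by (intro sum.mono_neutral_left) (auto simp: in_keys_iff)

lemma twisted_residue_add: "twisted_residue \<beta> (p + q) = twisted_residue \<beta> p + twisted_residue \<beta> q"
  using keys_add[of p q]
  by (simp add: twisted_residue_eq_sum[of "Poly_Mapping.keys p \<union> Poly_Mapping.keys q"]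
      lookup_add algebra_simps sum.distrib)

lemma twisted_residue_lscale: "twisted_residue \<beta> (lscale c p) = c * twisted_residue \<beta> p"
proof -
  have "Poly_Mapping.keys (lscale c p) \<subseteq> Poly_Mapping.keys p"
    by (auto simp: in_keys_iff)
  then show ?thesis
    by (simp add: twisted_residue_eq_sum[of "Poly_Mapping.keys p"] sum_distrib_left algebra_simps)
qed

lemma twisted_residue_zero: "twisted_residue \<beta> 0 = 0"
  by (simp add: twisted_residue_def)

lemma twisted_residue_single:
  "twisted_residue \<beta> (Poly_Mapping.single k c) = c * twisted_residue_coeff \<beta> k"
  by (simp add: twisted_residue_eq_sum[of "{k}"])

lemma twisted_residue_diff: "twisted_residue \<beta> (p - q) = twisted_residue \<beta> p - twisted_residue \<beta> q"
  by (metis add_diff_cancel_right' diff_add_cancel twisted_residue_add)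

lemma twisted_residue_coeff_rec:
  "of_int (k + 1) * twisted_residue_coeff \<beta> k + 2 * \<beta> * twisted_residue_coeff \<beta> (k - 1) = 0"
proof (cases "k \<ge> 0")
  case True
  then obtain m where k: "k = int m"
    using nonneg_eq_int by blast
  have "(1 + of_nat m :: 'a) \<noteq> 0"
    using of_nat_neq_0[of m] by simp
  then have "of_int (k + 1) * twisted_residue_coeff \<beta> k = (-2 * \<beta>) * ((-2 * \<beta>) ^ m / fact m)"
    by (simp add: twisted_residue_coeff_def k nat_add_distrib add.commute)
  moreover have "twisted_residue_coeff \<beta> (k - 1) = (-2 * \<beta>) ^ m / fact m"
    by (simp add: twisted_residue_coeff_def k)
  ultimately show ?thesis by simp
next
  case False
  then have "k = -1 \<or> k < -1" by linarith
  then show ?thesis by (auto simp: twisted_residue_coeff_def)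
qed

lemma twisted_residue_coeff_rec_inverse:
  assumes "0 \<le> i"
  shows "twisted_residue_coeff \<beta> i + 2 * inverse (of_int (i + 1)) * \<beta> * twisted_residue_coeff \<beta> (i - 1) = 0"
proof -
  from assms have "(of_int (i + 1) :: 'a) \<noteq> 0"
    by (subst of_int_eq_0_iff) simp
  with twisted_residue_coeff_rec[of i \<beta>] show ?thesis
    by (simp add: field_simps)
qed

lemma twisted_residue_exact:
  "twisted_residue \<beta> (lderiv w + lscale (2 * \<beta>) (lmono (-2) * w)) = 0"
proof (induction w rule: laurent_induct)
  case zero
  have "lderiv 0 = (0 :: 'a laurent)" by (rule poly_mapping_eqI) simp
  then show ?case by (simp add: twisted_residue_zero)
next
  case (add_monomial p k c)
  let ?D = "\<lambda>w. lderiv w + lscale (2 * \<beta>) (lmono (-2) * w)"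
  have "twisted_residue \<beta> (?D (Poly_Mapping.single k c))
      = c * (of_int k * twisted_residue_coeff \<beta> (k - 1) + 2 * \<beta> * twisted_residue_coeff \<beta> (k - 2))"
    by (simp add: lderiv_single lmono_mult_single twisted_residue_add twisted_residue_lscale
        twisted_residue_single) (simp add: algebra_simps)
  also have "\<dots> = 0"
    using twisted_residue_coeff_rec[of "k - 1" \<beta>] by simp
  finally have "twisted_residue \<beta> (?D (Poly_Mapping.single k c)) = 0" .
  moreover have "?D (p + Poly_Mapping.single k c) = ?D p + ?D (Poly_Mapping.single k c)"
    by (simp add: lderiv_add distrib_left L.scale_right_distrib ac_simps)
  ultimately show ?case
    using add_monomial.IH by (simp add: twisted_residue_add)
qed

lemma twisted_residue_os_bar:
  assumes "i \<noteq> -1"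
  shows "twisted_residue \<beta> (os_bar \<beta> i) = 0"
proof (cases "i < -1")
  case True
  then show ?thesis
    by (simp add: os_bar_def lmono_def twisted_residue_single twisted_residue_coeff_def)
next
  case False
  with assms have "twisted_residue_coeff \<beta> i
      + 2 * inverse (of_int (i + 1)) * \<beta> * twisted_residue_coeff \<beta> (i - 1) = 0"
    by (intro twisted_residue_coeff_rec_inverse) simp
  with False show ?thesis
    by (simp add: os_bar_def lmono_def twisted_residue_add twisted_residue_lscale twisted_residue_single
        algebra_simps)
qed

lemma lmono_minus_twisted_residue_in_os_bar_space:
  "lmono k - lscale (twisted_residue_coeff \<beta> k) (lmono (-1)) \<in> os_bar_space \<beta>"
proof -
  let ?B = "{os_bar \<beta> i | i. i \<noteq> -1}"
  have space: "os_bar_space \<beta> = L.span ?B"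
    by (simp add: os_bar_space_def lspan_eq_span)
  have "lmono k - lscale (twisted_residue_coeff \<beta> k) (lmono (-1)) \<in> L.span ?B" if "-1 \<le> k" for k
    using that
  proof (induction k rule: int_ge_induct)
    case base
    show ?case by (simp add: twisted_residue_coeff_def L.span_zero)
  next
    case (step k)
    define d where "d = 2 * inverse (of_int (k + 1 + 1)) * \<beta>"
    have os_bar: "os_bar \<beta> (k + 1) = lmono (k + 1) + lscale d (lmono k)"
      using step.hyps by (simp add: os_bar_def d_def)
    have "twisted_residue_coeff \<beta> (k + 1) + d * twisted_residue_coeff \<beta> k = 0"
      using twisted_residue_coeff_rec_inverse[of "k + 1" \<beta>] step.hyps by (simp add: d_def)
    then have rec: "twisted_residue_coeff \<beta> (k + 1) = - d * twisted_residue_coeff \<beta> k"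
      by (simp add: eq_neg_iff_add_eq_0)
    have "lmono (k + 1) - lscale (twisted_residue_coeff \<beta> (k + 1)) (lmono (-1))
        = os_bar \<beta> (k + 1) - lscale d (lmono k - lscale (twisted_residue_coeff \<beta> k) (lmono (-1)))"
      unfolding os_bar rec by (rule poly_mapping_eqI) (simp add: lookup_add lookup_minus algebra_simps)
    also have "\<dots> \<in> L.span ?B"
    proof (rule L.span_diff)
      show "os_bar \<beta> (k + 1) \<in> L.span ?B"
        using step.hyps by (intro L.span_base) auto
      show "lscale d (lmono k - lscale (twisted_residue_coeff \<beta> k) (lmono (-1))) \<in> L.span ?B"
        using step.IH by (rule L.span_scale)
    qed
    finally show ?case .
  qed
  moreover have "lmono k \<in> L.span ?B" if "k < -1"
    using that by (intro L.span_base) (auto simp: os_bar_def intro!: exI[of _ k])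
  ultimately show ?thesis
    by (cases "k < -1") (simp_all add: space twisted_residue_coeff_def)
qed

lemma minus_twisted_residue_in_os_bar_space:
  "u - lscale (twisted_residue \<beta> u) (lmono (-1)) \<in> os_bar_space \<beta>"
proof (induction u rule: laurent_induct)
  case zero
  show ?case by (simp add: twisted_residue_zero os_bar_space_def lspan_eq_span L.span_zero)
next
  case (add_monomial p k c)
  have "p + Poly_Mapping.single k c - lscale (twisted_residue \<beta> (p + Poly_Mapping.single k c)) (lmono (-1))
      = (p - lscale (twisted_residue \<beta> p) (lmono (-1)))
        + lscale c (lmono k - lscale (twisted_residue_coeff \<beta> k) (lmono (-1)))"
    by (rule poly_mapping_eqI)
      (simp add: twisted_residue_add twisted_residue_single lmono_def lookup_add lookup_minus
        lookup_single when_def algebra_simps)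
  also have "\<dots> \<in> os_bar_space \<beta>"
    using add_monomial.IH lmono_minus_twisted_residue_in_os_bar_space[of k \<beta>]
    by (simp add: os_bar_space_def lspan_eq_span L.span_add L.span_scale)
  finally show ?case .
qed

lemma os_bar_space_eq_kernel: "os_bar_space \<beta> = {u. twisted_residue \<beta> u = 0}"
proof
  show "os_bar_space \<beta> \<subseteq> {u. twisted_residue \<beta> u = 0}"
  proof
    fix u assume "u \<in> os_bar_space \<beta>"
    then have "u \<in> L.span {os_bar \<beta> i | i. i \<noteq> -1}"
      by (simp add: os_bar_space_def lspan_eq_span)
    then show "u \<in> {u. twisted_residue \<beta> u = 0}"
    proof (induction rule: L.span_induct)
      case base
      show ?case
        by (simp add: L.subspace_def twisted_residue_zero twisted_residue_add twisted_residue_lscale)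
    next
      case (step u)
      then show ?case by (auto simp: twisted_residue_os_bar)
    qed
  qed
  show "{u. twisted_residue \<beta> u = 0} \<subseteq> os_bar_space \<beta>"
  proof
    fix u assume "u \<in> {u. twisted_residue \<beta> u = 0}"
    then have "lscale (twisted_residue \<beta> u) (lmono (-1)) = 0"
      by (simp add: L.scale_zero_left)
    with minus_twisted_residue_in_os_bar_space[of u \<beta>] show "u \<in> os_bar_space \<beta>"
      by simp
  qed
qed

theorem mainTheorem15:
  fixes \<beta> :: "'a::field_char_0"
  shows "(\<forall>a\<in>os_bar_space \<beta>. \<forall>b\<in>os_bar_space \<beta>. os_star \<beta> a b \<in> os_bar_space \<beta>)
         \<and> is_alg_ideal (os_star \<beta>) (os_bar_space \<beta>)
         \<and> codim_one (os_bar_space \<beta>)"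
proof -
  note kernel = os_bar_space_eq_kernel[of \<beta>]
  have products: "os_star \<beta> a b \<in> os_bar_space \<beta>" for a b
    by (simp add: kernel os_star_def twisted_residue_exact)
  have "is_alg_ideal (os_star \<beta>) (os_bar_space \<beta>)"
    using products
    by (simp add: is_alg_ideal_def kernel twisted_residue_zero twisted_residue_add twisted_residue_lscale)
  moreover have "codim_one (os_bar_space \<beta>)"
  proof -
    have "twisted_residue \<beta> (lmono (-1)) = 1"
      by (simp add: lmono_def twisted_residue_single twisted_residue_coeff_def)
    then have "twisted_residue \<beta> (u - lscale (twisted_residue \<beta> u) (lmono (-1))) = 0" for u
      by (simp add: twisted_residue_diff twisted_residue_lscale)
    with \<open>twisted_residue \<beta> (lmono (-1)) = 1\<close> show ?thesis
      unfolding codim_one_def kernel by (intro exI[of _ "lmono (-1)"]) auto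
  qed
  ultimately show ?thesis
    using products by blast
qed

end
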